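(* Let $G$ be a (finite, simple) graph with $\operatorname{mad}(G) < 3$ and $\Delta(G) \leq 4$. Then $\chi'_{s}(G) \leq 3\Delta(G) + 1$.
   Context: $\Delta(G)$ denotes the maximum degree of $G$. The maximum average degree is $\operatorname{mad}(G) = \max_{H \subseteq G} \frac{2|E(H)|}{|V(H)|}$, the maximum over all (nonempty) subgraphs $H$ of $G$. A strong edge coloring of $G$ is an assignment of colors to the edges such that any two distinct edges $e_1 = uv$ and $e_2$ receive different colors whenever $e_2$ is incident with a vertex of $N_G(u) \cup N_G(v)$ (equivalently, a proper edge coloring in which every color class is an induced matching). The strong chromatic index $\chi'_s(G)$ is the minimum number of colors in a strong edge coloring of $G$. *)

theory Defs
  imports Main "HOL-Library.Disjoint_Sets" Complex_Main
begin

definition finite_simple_graph :: "'a set \<Rightarrow> 'a set set \<Rightarrow> bool" where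
  "finite_simple_graph V E \<longleftrightarrow> finite V \<and> (\<forall>e\<in>E. card e = 2 \<and> e \<subseteq> V)"

definition neighbors :: "'a set set \<Rightarrow> 'a \<Rightarrow> 'a set" where
  "neighbors E u = {w. {u, w} \<in> E}"

definition degree :: "'a set set \<Rightarrow> 'a \<Rightarrow> nat" where
  "degree E u = card (neighbors E u)"

definition max_degree :: "'a set \<Rightarrow> 'a set set \<Rightarrow> nat" where
  "max_degree V E = Max (insert 0 (degree E ` V))"

definition subgraph :: "'a set \<Rightarrow> 'a set set \<Rightarrow> 'a set \<Rightarrow> 'a set set \<Rightarrow> bool" where
  "subgraph W F V E \<longleftrightarrow> W \<subseteq> V \<and> F \<subseteq> E \<and> (\<forall>e\<in>F. e \<subseteq> W)"

definition mad :: "'a set \<Rightarrow> 'a set set \<Rightarrow> real" where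
  "mad V E = Max {2 * real (card F) / real (card W) | W F. subgraph W F V E \<and> W \<noteq> {}}"

definition strong_edge_coloring :: "'a set set \<Rightarrow> ('a set \<Rightarrow> nat) \<Rightarrow> bool" where
  "strong_edge_coloring E c \<longleftrightarrow>
     (\<forall>u v e2. {u, v} \<in> E \<longrightarrow> e2 \<in> E \<longrightarrow> e2 \<noteq> {u, v} \<longrightarrow>
        e2 \<inter> (neighbors E u \<union> neighbors E v) \<noteq> {} \<longrightarrow> c {u, v} \<noteq> c e2)"

definition strong_chromatic_index :: "'a set set \<Rightarrow> nat" where
  "strong_chromatic_index E =
     (LEAST k. \<exists>c. strong_edge_coloring E c \<and> (\<forall>e\<in>E. c e < k))"

end

theory Submission
  imports Defs
begin

(* The proof is by induction on the number of vertices, by the discharging method: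

   - Greedy extension: a colouring of G - v extends to G if the edges at v (plus possibly
     some further edges, which are recoloured) can be listed so that each listed edge has
     fewer than 3D + 1 conflicts outside the rest of the list; v is then called reducible.
   - Counting: an edge xy has at most conflict_bound E x y + conflict_bound E y x
     conflicts, where conflict_bound E x y = (d(x) - 1) + sum of (d(z) - 1) over the
     neighbours z <> y of x.
   - Reducible configurations: vertices of degree at most 1; degree-2 vertices with light
     neighbours; and (for D = 4) degree-2 vertices next to degree-4 vertices having many
     degree-2 neighbours.
   - Discharging: each degree-4 vertex sends 1/k to each of its k degree-2 neighbours.  If
     no vertex is reducible, every degree-2 vertex receives at least 1, which forces average
     degree at least 3, contradicting mad(G) < 3.  The theorem then follows directly. *)

lemma fsg_finite_edges: "finite_simple_graph V E \<Longrightarrow> finite E"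
  unfolding finite_simple_graph_def by (meson Pow_iff finite_Pow_iff finite_subset subsetI)

lemma fsg_edge_cases: "finite_simple_graph V E \<Longrightarrow> e \<in> E \<Longrightarrow> \<exists>a b. a \<noteq> b \<and> e = {a, b}"
  unfolding finite_simple_graph_def by (metis card_2_iff)

lemma neighbors_subset: "finite_simple_graph V E \<Longrightarrow> neighbors E u \<subseteq> V"
  unfolding finite_simple_graph_def neighbors_def by auto

lemma finite_neighbors: "finite_simple_graph V E \<Longrightarrow> finite (neighbors E u)"
  by (meson finite_simple_graph_def neighbors_subset finite_subset)

lemma not_self_neighbor: "finite_simple_graph V E \<Longrightarrow> u \<notin> neighbors E u"
  unfolding finite_simple_graph_def neighbors_def by force

lemma neighbors_sym: "w \<in> neighbors E u \<longleftrightarrow> u \<in> neighbors E w"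
  unfolding neighbors_def by (simp add: insert_commute)

lemma neighbor_edge: "w \<in> neighbors E v \<Longrightarrow> {v, w} \<in> E"
  unfolding neighbors_def by simp

lemma degree_pos: "finite_simple_graph V E \<Longrightarrow> z \<in> neighbors E w \<Longrightarrow> 1 \<le> degree E w"
  unfolding degree_def using finite_neighbors
  by (metis One_nat_def Suc_leI card_gt_0_iff empty_iff)

lemma degree_two: "neighbors E v = {w, x} \<Longrightarrow> w \<noteq> x \<Longrightarrow> degree E v = 2"
  unfolding degree_def by simp

lemma degree_two_neighbors:
  assumes "degree E v = 2"
  obtains w x where "neighbors E v = {w, x}" "w \<noteq> x"
  using assms unfolding degree_def by (meson card_2_iff)

lemma degree_le_max_degree: "finite_simple_graph V E \<Longrightarrow> u \<in> V \<Longrightarrow> degree E u \<le> max_degree V E"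
  unfolding max_degree_def finite_simple_graph_def by auto

definition edges_at :: "'a set set \<Rightarrow> 'a \<Rightarrow> 'a set set" where
  "edges_at E y = {e\<in>E. y \<in> e}"

lemma edges_at_eq:
  assumes "finite_simple_graph V E"
  shows "edges_at E y = (\<lambda>w. {y, w}) ` neighbors E y"
proof (intro equalityI subsetI)
  fix e assume e: "e \<in> edges_at E y"
  then obtain a b where "a \<noteq> b" "e = {a, b}"
    using fsg_edge_cases[OF assms] unfolding edges_at_def by blast
  with e show "e \<in> (\<lambda>w. {y, w}) ` neighbors E y"
    unfolding edges_at_def neighbors_def by (auto simp: insert_commute)
qed (auto simp: edges_at_def neighbors_def)

lemma card_edges_at: "finite_simple_graph V E \<Longrightarrow> card (edges_at E y) = degree E y"
  unfolding degree_def edges_at_eq by (simp add: card_image inj_on_def doubleton_eq_iff)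

lemma degree_sum:
  assumes fsg: "finite_simple_graph V E"
  shows "(\<Sum>u\<in>V. degree E u) = 2 * card E"
proof -
  have fV: "finite V" and fE: "finite E"
    using fsg fsg_finite_edges unfolding finite_simple_graph_def by auto
  have "(\<Sum>u\<in>V. degree E u) = (\<Sum>u\<in>V. card {e\<in>E. u \<in> e})"
    using card_edges_at[OF fsg] unfolding edges_at_def by simp
  also have "\<dots> = (\<Sum>e\<in>E. card {u\<in>V. u \<in> e})"
    unfolding card_eq_sum using sum.swap_restrict[OF fV fE, of "\<lambda>_ _. 1::nat" "\<lambda>u e. u \<in> e"] by simp
  also have "\<dots> = (\<Sum>e\<in>E. 2)"
  proof (rule sum.cong)
    fix e assume "e \<in> E"
    then have "{u\<in>V. u \<in> e} = e" "card e = 2" using fsg unfolding finite_simple_graph_def by auto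
    then show "card {u\<in>V. u \<in> e} = 2" by simp
  qed simp
  finally show ?thesis by simp
qed

definition conflict :: "'a set set \<Rightarrow> 'a set \<Rightarrow> 'a set \<Rightarrow> bool" where
  "conflict E e f \<longleftrightarrow> f \<noteq> e \<and> (\<exists>x\<in>e. \<exists>y\<in>f. y \<in> neighbors E x)"

definition conflicts :: "'a set set \<Rightarrow> 'a set \<Rightarrow> 'a set set" where
  "conflicts E e = {f\<in>E. conflict E e f}"

lemma conflict_sym: "conflict E e f \<Longrightarrow> conflict E f e"
  unfolding conflict_def using neighbors_sym by metis

lemma conflict_irrefl: "\<not> conflict E e e"
  unfolding conflict_def by simp

lemma finite_conflicts: "finite_simple_graph V E \<Longrightarrow> finite (conflicts E e)"
  unfolding conflicts_def by (simp add: fsg_finite_edges)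

definition proper_coloring :: "('b \<Rightarrow> 'b \<Rightarrow> bool) \<Rightarrow> 'b set \<Rightarrow> ('b \<Rightarrow> nat) \<Rightarrow> bool" where
  "proper_coloring R A c \<longleftrightarrow> (\<forall>a\<in>A. \<forall>b\<in>A. R a b \<longrightarrow> c a \<noteq> c b)"

lemma strong_edge_coloring_iff:
  assumes "finite_simple_graph V E"
  shows "strong_edge_coloring E c \<longleftrightarrow> proper_coloring (conflict E) E c"
proof -
  have "conflict E {u, v} f \<longleftrightarrow> f \<noteq> {u, v} \<and> f \<inter> (neighbors E u \<union> neighbors E v) \<noteq> {}"
    for u v f unfolding conflict_def by blast
  moreover have "\<exists>u v. e = {u, v}" if "e \<in> E" for e
    using fsg_edge_cases[OF assms that] by blast
  ultimately show ?thesis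
    unfolding strong_edge_coloring_def proper_coloring_def by metis
qed

section \<open>Greedy extension of colourings\<close>

lemma free_colour:
  assumes "finite S" "card S < K"
  obtains k where "k < K" "k \<notin> c ` S"
proof -
  have "card (c ` S) < card {..<K}" using assms card_image_le[of S c] by simp
  then have "\<not> {..<K} \<subseteq> c ` S" using assms(1) by (meson card_mono finite_imageI not_le)
  then show ?thesis using that by blast
qed

lemma greedy_extension:
  fixes R :: "'b \<Rightarrow> 'b \<Rightarrow> bool"
  assumes sym: "\<And>a b. R a b \<Longrightarrow> R b a" and irrefl: "\<And>a. \<not> R a a"
    and fin: "finite A" and col: "proper_coloring R A c" "\<forall>a\<in>A. c a < K"
    and few: "\<forall>i<length fs. card {b \<in> A \<union> set (take i fs). R (fs ! i) b} < K"
  shows "\<exists>c'. proper_coloring R (A \<union> set fs) c' \<and> (\<forall>a\<in>A \<union> set fs. c' a < K)"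
  using few
proof (induction fs rule: rev_induct)
  case Nil
  then show ?case using col by auto
next
  case (snoc a fs)
  have "card {b \<in> A \<union> set (take i fs). R (fs ! i) b} < K" if "i < length fs" for i
    using snoc.prems[rule_format, of i] that by (simp add: nth_append)
  then obtain c' where c': "proper_coloring R (A \<union> set fs) c'" "\<forall>b\<in>A \<union> set fs. c' b < K"
    using snoc.IH by blast
  define N where "N = {b \<in> A \<union> set fs. R a b}"
  have "finite N" "card N < K"
    using fin snoc.prems[rule_format, of "length fs"] unfolding N_def by auto
  then obtain k where k: "k < K" "k \<notin> c' ` N" by (rule free_colour)
  have "(c'(a := k)) b \<noteq> (c'(a := k)) b'"
    if "b \<in> A \<union> set (fs @ [a])" "b' \<in> A \<union> set (fs @ [a])" "R b b'" for b b'
  proof -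
    have "b \<noteq> b'" using irrefl that(3) by blast
    moreover have "b' \<in> N" if "b = a" using that \<open>b \<noteq> b'\<close> \<open>b' \<in> _\<close> \<open>R b b'\<close> N_def by auto
    moreover have "b \<in> N" if "b' = a" using that \<open>b \<noteq> b'\<close> \<open>b \<in> _\<close> \<open>R b b'\<close> sym N_def by auto
    ultimately show ?thesis
      using c'(1) k(2) that unfolding proper_coloring_def by (cases "b = a"; cases "b' = a") auto
  qed
  then have "proper_coloring R (A \<union> set (fs @ [a])) (c'(a := k))"
    unfolding proper_coloring_def by blast
  moreover have "\<forall>b\<in>A \<union> set (fs @ [a]). (c'(a := k)) b < K" using c'(2) k(1) by auto
  ultimately show ?case by (intro exI[of _ "c'(a := k)"] conjI)
qed

section \<open>Reducible vertices\<close>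

text \<open>A vertex v is reducible for K colours if the edges at v,
  possibly together with further edges to be recoloured, can be listed so that every listed
  edge conflicts with fewer than K edges other than those listed after it.\<close>

definition reducible :: "'a set set \<Rightarrow> 'a \<Rightarrow> nat \<Rightarrow> bool" where
  "reducible E v K \<longleftrightarrow> (\<exists>fs. distinct fs \<and> set fs \<subseteq> E \<and> edges_at E v \<subseteq> set fs \<and>
     (\<forall>i<length fs. card (conflicts E (fs ! i) - set (drop (Suc i) fs)) < K))"

lemma delete_vertex_graph:
  "finite_simple_graph V E \<Longrightarrow> finite_simple_graph (V - {v}) {e\<in>E. v \<notin> e}"
  unfolding finite_simple_graph_def by auto

lemma conflict_delete_vertex:
  "conflict E e f \<Longrightarrow> v \<notin> e \<Longrightarrow> v \<notin> f \<Longrightarrow> conflict {e\<in>E. v \<notin> e} e f"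
  unfolding conflict_def neighbors_def by auto

text \<open>Reducibility is what makes the induction work: a colouring of G - v with
  K colours extends to G by recolouring the listed edges greedily.\<close>

lemma reducible_extend:
  assumes fsg: "finite_simple_graph V E"
    and col: "strong_edge_coloring {e\<in>E. v \<notin> e} c" "\<forall>e\<in>{e\<in>E. v \<notin> e}. c e < K"
    and red: "reducible E v K"
  shows "\<exists>c. strong_edge_coloring E c \<and> (\<forall>e\<in>E. c e < K)"
proof -
  obtain fs where fs: "distinct fs" "set fs \<subseteq> E" "edges_at E v \<subseteq> set fs"
    and few: "\<forall>i<length fs. card (conflicts E (fs ! i) - set (drop (Suc i) fs)) < K"
    using red unfolding reducible_def by blast
  define A where "A = {e\<in>E. v \<notin> e} - set fs"
  have finA: "finite A" unfolding A_def using fsg_finite_edges[OF fsg] by simp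
  have "proper_coloring (conflict {e\<in>E. v \<notin> e}) {e\<in>E. v \<notin> e} c"
    using col(1) strong_edge_coloring_iff[OF delete_vertex_graph[OF fsg]] by blast
  then have colA: "proper_coloring (conflict E) A c"
    unfolding proper_coloring_def A_def by (auto dest: conflict_delete_vertex)
  have "card {f \<in> A \<union> set (take i fs). conflict E (fs ! i) f} < K" if i: "i < length fs" for i
  proof -
    have "set (take i fs) \<inter> set (drop (Suc i) fs) = {}"
      using fs(1) by (simp add: set_take_disj_set_drop_if_distinct)
    then have "{f \<in> A \<union> set (take i fs). conflict E (fs ! i) f}
        \<subseteq> conflicts E (fs ! i) - set (drop (Suc i) fs)"
      using fs(2) set_take_subset[of i fs] set_drop_subset[of "Suc i" fs]
      unfolding A_def conflicts_def by blast
    then show ?thesis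
      using few i finite_conflicts[OF fsg] by (meson card_mono finite_Diff le_less_trans)
  qed
  then obtain c' where "proper_coloring (conflict E) (A \<union> set fs) c'" "\<forall>e\<in>A \<union> set fs. c' e < K"
    using greedy_extension[OF conflict_sym conflict_irrefl finA colA] col(2) unfolding A_def by blast
  moreover have "A \<union> set fs = E" using fs(2,3) unfolding A_def edges_at_def by auto
  ultimately show ?thesis using strong_edge_coloring_iff[OF fsg] by auto
qed

section \<open>Counting conflicts\<close>

definition conflicts_via :: "'a set set \<Rightarrow> 'a \<Rightarrow> 'a \<Rightarrow> 'a set set" where
  "conflicts_via E x y =
     (edges_at E x - {{x, y}}) \<union> (\<Union>z\<in>neighbors E x - {y}. edges_at E z - {{z, x}})"

definition conflict_bound :: "'a set set \<Rightarrow> 'a \<Rightarrow> 'a \<Rightarrow> nat" where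
  "conflict_bound E x y = (degree E x - 1) + (\<Sum>z\<in>neighbors E x - {y}. degree E z - 1)"

lemma conflict_via_endpoint:
  assumes "f \<in> E" "f \<noteq> {x, w}" "y \<in> f" "y \<in> neighbors E x"
  shows "f \<in> conflicts_via E x w \<union> conflicts_via E w x"
proof (cases "y = w \<or> y = x \<or> f = {x, y}")
  case True
  then show ?thesis using assms
    unfolding conflicts_via_def edges_at_def by (auto simp: insert_commute)
next
  case False
  then have "f \<in> edges_at E y - {{y, x}}" "y \<in> neighbors E x - {w}"
    using assms unfolding edges_at_def by (auto simp: insert_commute)
  then show ?thesis unfolding conflicts_via_def by blast
qed

lemma conflicts_subset_via: "conflicts E {u, v} \<subseteq> conflicts_via E u v \<union> conflicts_via E v u"
proof
  fix f assume "f \<in> conflicts E {u, v}"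
  then obtain x y where f: "f \<in> E" "f \<noteq> {u, v}" "x \<in> {u, v}" "y \<in> f" "y \<in> neighbors E x"
    unfolding conflicts_def conflict_def by blast
  show "f \<in> conflicts_via E u v \<union> conflicts_via E v u"
  proof (cases "x = u")
    case True
    then show ?thesis using conflict_via_endpoint[OF f(1,2,4)] f(5) by blast
  next
    case False
    then have "x = v" using f(3) by blast
    then show ?thesis using conflict_via_endpoint[of f E v u y] f by (auto simp: insert_commute)
  qed
qed

lemma card_edges_at_minus:
  "finite_simple_graph V E \<Longrightarrow> y \<in> neighbors E x \<Longrightarrow> card (edges_at E x - {{x, y}}) = degree E x - 1"
  using card_edges_at[of V E x] fsg_finite_edges[of V E]
  by (simp add: edges_at_def neighbors_def)

lemma card_conflicts_via:
  assumes fsg: "finite_simple_graph V E" and y: "y \<in> neighbors E x"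
  shows "card (conflicts_via E x y) \<le> conflict_bound E x y"
proof -
  have "card (conflicts_via E x y) \<le> card (edges_at E x - {{x, y}})
      + card (\<Union>z\<in>neighbors E x - {y}. edges_at E z - {{z, x}})"
    unfolding conflicts_via_def by (rule card_Un_le)
  also have "card (\<Union>z\<in>neighbors E x - {y}. edges_at E z - {{z, x}})
      \<le> (\<Sum>z\<in>neighbors E x - {y}. card (edges_at E z - {{z, x}}))"
    using finite_neighbors[OF fsg] by (intro card_UN_le) simp
  also have "\<dots> = (\<Sum>z\<in>neighbors E x - {y}. degree E z - 1)"
    using card_edges_at_minus[OF fsg] neighbors_sym[of _ E x] by (intro sum.cong) auto
  finally show ?thesis
    unfolding conflict_bound_def card_edges_at_minus[OF fsg y] by simp
qed

lemma card_conflicts_le: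
  assumes fsg: "finite_simple_graph V E" and uv: "{u, v} \<in> E"
  shows "card (conflicts E {u, v}) \<le> conflict_bound E u v + conflict_bound E v u"
proof -
  have nbrs: "v \<in> neighbors E u" "u \<in> neighbors E v"
    using uv unfolding neighbors_def by (auto simp: insert_commute)
  have "conflicts_via E x y \<subseteq> E" for x y
    unfolding conflicts_via_def edges_at_def by blast
  then have fin: "finite (conflicts_via E x y)" for x y
    using fsg_finite_edges[OF fsg] by (rule finite_subset)
  have "card (conflicts E {u, v}) \<le> card (conflicts_via E u v \<union> conflicts_via E v u)"
    using fin conflicts_subset_via[of E u v] by (intro card_mono) auto
  also have "\<dots> \<le> card (conflicts_via E u v) + card (conflicts_via E v u)" by (rule card_Un_le)
  finally show ?thesis using card_conflicts_via[OF fsg nbrs(1)] card_conflicts_via[OF fsg nbrs(2)]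
    by linarith
qed

lemma sum_degrees_le:
  assumes "A \<subseteq> V" "\<forall>u\<in>V. degree E u \<le> D"
  shows "(\<Sum>y\<in>A. degree E y - 1) \<le> card A * (D - 1)"
proof -
  have "degree E y - 1 \<le> D - 1" if "y \<in> A" for y using assms that by (meson diff_le_mono subsetD)
  then show ?thesis using sum_bounded_above[of A "\<lambda>y. degree E y - 1" "D - 1"] by simp
qed

lemma conflict_bound_le:
  assumes fsg: "finite_simple_graph V E" and deg: "\<forall>u\<in>V. degree E u \<le> D"
    and y: "y \<in> neighbors E x"
  shows "conflict_bound E x y \<le> (degree E x - 1) * D"
proof -
  have "x \<in> V" using y neighbors_subset[OF fsg, of y] neighbors_sym[of y E x] by blast
  then have dx: "1 \<le> degree E x" "degree E x \<le> D" using degree_pos[OF fsg y] deg by auto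
  have "(\<Sum>z\<in>neighbors E x - {y}. degree E z - 1) \<le> card (neighbors E x - {y}) * (D - 1)"
    using neighbors_subset[OF fsg, of x] deg by (intro sum_degrees_le) auto
  also have "card (neighbors E x - {y}) = degree E x - 1"
    using finite_neighbors[OF fsg] y unfolding degree_def by simp
  finally have "conflict_bound E x y \<le> (degree E x - 1) + (degree E x - 1) * (D - 1)"
    unfolding conflict_bound_def by simp
  also have "\<dots> = (degree E x - 1) * D" using dx by (cases D) auto
  finally show ?thesis .
qed

lemma conflict_bound_deg2_vertex:
  assumes fsg: "finite_simple_graph V E" and N: "neighbors E v = {w, x}" "w \<noteq> x"
  shows "conflict_bound E v w = degree E x"
proof -
  have "degree E v = 2" using degree_two[OF N] .
  moreover have "neighbors E v - {w} = {x}" using N by auto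
  moreover have "1 \<le> degree E x" using degree_pos[OF fsg] N neighbors_sym[of x E v] by blast
  ultimately show ?thesis unfolding conflict_bound_def by simp
qed

definition deg2_count :: "'a set set \<Rightarrow> 'a \<Rightarrow> nat" where
  "deg2_count E w = card {y\<in>neighbors E w. degree E y = 2}"

text \<open>Refinement of conflict_bound_le when the edge leads to a degree-2 neighbour
  z of w: the other degree-2 neighbours of w contribute 1 each.\<close>

lemma conflict_bound_deg2_nbr:
  assumes fsg: "finite_simple_graph V E" and deg: "\<forall>u\<in>V. degree E u \<le> D"
    and z: "z \<in> neighbors E w" "degree E z = 2"
  shows "conflict_bound E w z
    \<le> (degree E w - 1) + (deg2_count E w - 1) + (degree E w - deg2_count E w) * (D - 1)"
proof -
  define Z where "Z = {y\<in>neighbors E w. degree E y = 2}"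
  define A where "A = neighbors E w - {z}"
  have fin: "finite (neighbors E w)" using finite_neighbors[OF fsg] .
  have Z: "z \<in> Z" "Z \<subseteq> neighbors E w" "finite Z" using z fin unfolding Z_def by auto
  have "A \<inter> Z = Z - {z}" "A - Z = neighbors E w - Z" using Z unfolding A_def by auto
  moreover have "card Z = deg2_count E w" unfolding Z_def deg2_count_def ..
  ultimately have cards: "card (A \<inter> Z) = deg2_count E w - 1" "card (A - Z) = degree E w - deg2_count E w"
    using Z fin unfolding degree_def by (simp_all add: card_Diff_subset)
  have "(\<Sum>y\<in>A. degree E y - 1) = (\<Sum>y\<in>A \<inter> Z. degree E y - 1) + (\<Sum>y\<in>A - Z. degree E y - 1)"
    using fin unfolding A_def by (intro sum.Int_Diff) simp
  also have "(\<Sum>y\<in>A \<inter> Z. degree E y - 1) = card (A \<inter> Z)" by (simp add: Z_def)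
  also have "(\<Sum>y\<in>A - Z. degree E y - 1) \<le> card (A - Z) * (D - 1)"
    using neighbors_subset[OF fsg, of w] deg unfolding A_def by (intro sum_degrees_le) auto
  finally have "(\<Sum>y\<in>A. degree E y - 1) \<le> card (A \<inter> Z) + card (A - Z) * (D - 1)" by simp
  then show ?thesis unfolding conflict_bound_def A_def[symmetric] cards by simp
qed

lemma deg2_count_pos:
  assumes fsg: "finite_simple_graph V E" and z: "z \<in> neighbors E w" "degree E z = 2"
  shows "1 \<le> deg2_count E w"
proof -
  have "z \<in> {y\<in>neighbors E w. degree E y = 2}" using z by simp
  moreover have "finite {y\<in>neighbors E w. degree E y = 2}" using finite_neighbors[OF fsg] by simp
  ultimately have "card {y\<in>neighbors E w. degree E y = 2} \<noteq> 0" by (metis card_0_eq empty_iff)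
  then show ?thesis unfolding deg2_count_def by simp
qed

lemma reducible_isolated:
  "finite_simple_graph V E \<Longrightarrow> neighbors E v = {} \<Longrightarrow> reducible E v K"
  unfolding reducible_def using edges_at_eq[of V E v] by (intro exI[of _ "[]"]) simp

lemma reducible_deg1:
  assumes fsg: "finite_simple_graph V E" and N: "neighbors E v = {w}"
    and few: "card (conflicts E {v, w}) < K"
  shows "reducible E v K"
  unfolding reducible_def
  by (rule exI[of _ "[{v, w}]"]) (use N few neighbor_edge[of w E v] edges_at_eq[OF fsg, of v] in simp)

text \<open>A vertex of degree 2 with neighbours w, x: colour vw first (it sees the still
  uncoloured edge vx among its conflicts), then vx.\<close>

lemma reducible_deg2:
  assumes fsg: "finite_simple_graph V E" and N: "neighbors E v = {w, x}" "w \<noteq> x"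
    and few: "card (conflicts E {v, w}) \<le> K" "card (conflicts E {v, x}) < K"
  shows "reducible E v K"
  unfolding reducible_def
proof (rule exI[of _ "[{v, w}, {v, x}]"], intro conjI allI impI)
  have e: "{v, w} \<in> E" "{v, x} \<in> E" using N neighbor_edge by fastforce+
  then show "set [{v, w}, {v, x}] \<subseteq> E" by simp
  show "edges_at E v \<subseteq> set [{v, w}, {v, x}]" using edges_at_eq[OF fsg, of v] N(1) by auto
  show "distinct [{v, w}, {v, x}]" using N(2) by (auto simp: doubleton_eq_iff)
  have "{v, x} \<in> conflicts E {v, w}"
    using e N unfolding conflicts_def conflict_def by (auto simp: doubleton_eq_iff)
  then have "card (conflicts E {v, w} - {{v, x}}) < K"
    using few(1) finite_conflicts[OF fsg] card_Diff1_less by (metis order_less_le_trans)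
  moreover fix i assume "i < length [{v, w}, {v, x}]"
  ultimately show "card (conflicts E ([{v, w}, {v, x}] ! i) - set (drop (Suc i) [{v, w}, {v, x}])) < K"
    using few(2) by (cases i) auto
qed

text \<open>A vertex v of degree 2 with neighbours w, x, where w has a further neighbour v':
  colour vx first (the uncoloured edges wv' and vw are among its conflicts), then wv'
  (with vw still uncoloured), then vw.\<close>

lemma reducible_deg2_path:
  assumes fsg: "finite_simple_graph V E" and N: "neighbors E v = {w, x}" "w \<noteq> x"
    and v': "v' \<in> neighbors E w" "v' \<noteq> v"
    and few: "card (conflicts E {v, x}) \<le> K + 1" "card (conflicts E {w, v'}) < K"
      "card (conflicts E {v, w}) < K"
  shows "reducible E v K"
  unfolding reducible_def
proof (rule exI[of _ "[{v, x}, {w, v'}, {v, w}]"], intro conjI allI impI)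
  have e: "{v, w} \<in> E" "{v, x} \<in> E" "{w, v'} \<in> E" using N v'(1) by (auto intro: neighbor_edge)
  then show "set [{v, x}, {w, v'}, {v, w}] \<subseteq> E" by simp
  show "edges_at E v \<subseteq> set [{v, x}, {w, v'}, {v, w}]" using edges_at_eq[OF fsg, of v] N(1) by auto
  have "v \<noteq> w" using N(1) not_self_neighbor[OF fsg, of v] by auto
  then show "distinct [{v, x}, {w, v'}, {v, w}]" using N(2) v'(2) by (auto simp: doubleton_eq_iff)
  have "{{w, v'}, {v, w}} \<subseteq> conflicts E {v, x}" "card {{w, v'}, {v, w}} = 2"
    using e N v' \<open>v \<noteq> w\<close> unfolding conflicts_def conflict_def by (auto simp: doubleton_eq_iff)
  then have "card (conflicts E {v, x} - {{w, v'}, {v, w}}) < K"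
    using few(1) finite_conflicts[OF fsg] card_mono[of "conflicts E {v, x}" "{{w, v'}, {v, w}}"]
    by (simp add: card_Diff_subset)
  moreover have "card (conflicts E {w, v'} - {{v, w}}) < K"
    using few(2) finite_conflicts[OF fsg] by (meson card_Diff1_le le_less_trans)
  moreover fix i assume "i < length [{v, x}, {w, v'}, {v, w}]"
  ultimately show "card (conflicts E ([{v, x}, {w, v'}, {v, w}] ! i)
      - set (drop (Suc i) [{v, x}, {w, v'}, {v, w}])) < K"
    using few(3) by (cases i; cases "i - 1") auto
qed

section \<open>The reducible configurations\<close>

lemma card_conflicts_deg2:
  assumes fsg: "finite_simple_graph V E" and N: "neighbors E v = {w, x}" "w \<noteq> x"
  shows "card (conflicts E {v, w}) \<le> degree E x + conflict_bound E w v"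
  using card_conflicts_le[OF fsg, of v w] conflict_bound_deg2_vertex[OF fsg N] N(1)
  by (simp add: neighbor_edge)

text \<open>A vertex of degree at most 1: its edge vw has at most (D - 1) D < 3D + 1 conflicts.\<close>

lemma reducible_low_degree:
  assumes fsg: "finite_simple_graph V E" and deg: "\<forall>u\<in>V. degree E u \<le> D" and D: "D \<le> 4"
    and dv: "degree E v \<le> 1"
  shows "reducible E v (3 * D + 1)"
proof (cases "degree E v")
  case 0
  then have "neighbors E v = {}" using finite_neighbors[OF fsg] unfolding degree_def by simp
  then show ?thesis by (rule reducible_isolated[OF fsg])
next
  case (Suc n)
  then have "card (neighbors E v) = 1" using dv unfolding degree_def by simp
  then obtain w where N: "neighbors E v = {w}" by (rule card_1_singletonE)
  have vw: "v \<in> neighbors E w" using N neighbors_sym[of w E v] by simp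
  have "degree E w \<le> D" using deg neighbors_subset[OF fsg, of v] N by auto
  have "conflict_bound E v w = 0" unfolding conflict_bound_def degree_def N by simp
  moreover have "{v, w} \<in> E" using N neighbor_edge[of w E v] by simp
  ultimately have "card (conflicts E {v, w}) \<le> (degree E w - 1) * D"
    using card_conflicts_le[OF fsg, of v w] conflict_bound_le[OF fsg deg vw] by simp
  also have "\<dots> \<le> (D - 1) * D" using \<open>degree E w \<le> D\<close> by (simp add: diff_le_mono)
  also have "\<dots> < 3 * D + 1" using D by (simp add: le_Suc_eq numeral_eq_Suc; elim disjE) auto
  finally show ?thesis using reducible_deg1[OF fsg N] by blast
qed

lemma reducible_deg2_light:
  assumes fsg: "finite_simple_graph V E" and deg: "\<forall>u\<in>V. degree E u \<le> D" and D: "D \<le> 4"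
    and N: "neighbors E v = {w, x}" "w \<noteq> x" and light: "degree E w \<le> 3" "degree E x \<le> 3"
  shows "reducible E v (3 * D + 1)"
proof -
  have arith: "b + (a - 1) * D < 3 * D + 1" if "a \<le> 3" "a \<le> D" "b \<le> 3" "b \<le> D" for a b :: nat
  proof -
    have "a \<in> {0, 1, 2, 3}" "D \<in> {0, 1, 2, 3, 4}" using that D by auto
    then show ?thesis using that by auto
  qed
  have nbrs: "v \<in> neighbors E w" "v \<in> neighbors E x"
    using N neighbors_sym[of _ E v] by auto
  have "degree E w \<le> D" "degree E x \<le> D"
    using deg neighbors_subset[OF fsg, of v] N by auto
  then have "card (conflicts E {v, w}) < 3 * D + 1" "card (conflicts E {v, x}) < 3 * D + 1"
    using card_conflicts_deg2[OF fsg N] card_conflicts_deg2[OF fsg, of v x w] N light arith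
      conflict_bound_le[OF fsg deg nbrs(1)] conflict_bound_le[OF fsg deg nbrs(2)]
    by (fastforce simp: insert_commute)+
  then show ?thesis using reducible_deg2[OF fsg N] by simp
qed

lemma deg2_count_le_degree: "finite_simple_graph V E \<Longrightarrow> deg2_count E w \<le> degree E w"
  unfolding deg2_count_def degree_def by (simp add: card_mono finite_neighbors)

lemma conflict_bound_deg4:
  assumes fsg: "finite_simple_graph V E" and deg: "\<forall>u\<in>V. degree E u \<le> 4"
    and w: "degree E w = 4" and z: "z \<in> neighbors E w" "degree E z = 2"
  shows "conflict_bound E w z + 2 * deg2_count E w \<le> 14"
  using conflict_bound_deg2_nbr[OF fsg deg z] deg2_count_pos[OF fsg z] deg2_count_le_degree[OF fsg, of w] w
  by simp

lemma reducible_deg2_one_heavy: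
  assumes fsg: "finite_simple_graph V E" and deg: "\<forall>u\<in>V. degree E u \<le> 4"
    and N: "neighbors E v = {w, x}" "w \<noteq> x"
    and w: "degree E w = 4" "2 \<le> deg2_count E w" and x: "degree E x \<le> 3"
  shows "reducible E v 13"
proof -
  have nbrs: "v \<in> neighbors E w" "v \<in> neighbors E x" using N neighbors_sym[of _ E v] by auto
  have "card (conflicts E {v, w}) \<le> 13"
    using card_conflicts_deg2[OF fsg N] conflict_bound_deg4[OF fsg deg w(1) nbrs(1) degree_two[OF N]] w x
    by linarith
  moreover have "card (conflicts E {v, x}) < 13"
    using card_conflicts_deg2[OF fsg, of v x w] N conflict_bound_le[OF fsg deg nbrs(2)] w x
    by (simp add: insert_commute)
  ultimately show ?thesis using reducible_deg2[OF fsg N] by simp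
qed

lemma reducible_deg2_two_heavy:
  assumes fsg: "finite_simple_graph V E" and deg: "\<forall>u\<in>V. degree E u \<le> 4"
    and N: "neighbors E v = {w, x}" "w \<noteq> x"
    and w: "degree E w = 4" "3 \<le> deg2_count E w" and x: "degree E x = 4" "2 \<le> deg2_count E x"
  shows "reducible E v 13"
proof -
  have nbrs: "v \<in> neighbors E w" "v \<in> neighbors E x" using N neighbors_sym[of _ E v] by auto
  have dv: "degree E v = 2" using degree_two[OF N] .
  let ?Z = "{y\<in>neighbors E w. degree E y = 2}"
  have "v \<in> ?Z" "finite ?Z" "1 < card ?Z"
    using nbrs dv w(2) finite_neighbors[OF fsg, of w] unfolding deg2_count_def by auto
  then have "card (?Z - {v}) \<noteq> 0" by simp
  then have "?Z - {v} \<noteq> {}" by (metis card.empty)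
  then obtain v' where v': "v' \<in> neighbors E w" "degree E v' = 2" "v' \<noteq> v" by blast
  obtain a b where "neighbors E v' = {a, b}" "a \<noteq> b" using v'(2) by (rule degree_two_neighbors)
  moreover have "w \<in> neighbors E v'" using v'(1) neighbors_sym[of v' E w] by simp
  ultimately obtain z where Nv': "neighbors E v' = {w, z}" "w \<noteq> z" by (auto simp: insert_commute)
  have "degree E z \<le> 4" using deg neighbors_subset[OF fsg, of v'] Nv' by auto
  then have "card (conflicts E {w, v'}) < 13"
    using card_conflicts_deg2[OF fsg Nv'] conflict_bound_deg4[OF fsg deg w(1) v'(1,2)] w
    by (simp add: insert_commute)
  moreover have "card (conflicts E {v, x}) \<le> 13 + 1"
    using card_conflicts_deg2[OF fsg, of v x w] N conflict_bound_deg4[OF fsg deg x(1) nbrs(2) dv] w x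
    by (simp add: insert_commute)
  moreover have "card (conflicts E {v, w}) < 13"
    using card_conflicts_deg2[OF fsg N] conflict_bound_deg4[OF fsg deg w(1) nbrs(1) dv] w x
    by simp
  ultimately show ?thesis using reducible_deg2_path[OF fsg N v'(1,3)] by blast
qed

section \<open>Discharging\<close>

lemma irreducible_deg2_neighbor:
  assumes fsg: "finite_simple_graph V E" and deg: "\<forall>u\<in>V. degree E u \<le> 4"
    and N: "neighbors E v = {w, x}" "w \<noteq> x" and irr: "\<not> reducible E v 13"
    and bad: "degree E w \<noteq> 4 \<or> 3 \<le> deg2_count E w"
  shows "degree E x = 4 \<and> deg2_count E x = 1"
proof -
  have N': "neighbors E v = {x, w}" "x \<noteq> w" using N by auto
  have "degree E w \<le> 4" "degree E x \<le> 4" using deg neighbors_subset[OF fsg, of v] N by auto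
  have "v \<in> neighbors E x" using N neighbors_sym[of x E v] by simp
  then have kx: "1 \<le> deg2_count E x" using deg2_count_pos[OF fsg _ degree_two[OF N]] by blast
  have light: "reducible E v 13" if "degree E w \<le> 3" "degree E x \<le> 3"
    using reducible_deg2_light[OF fsg deg _ N that] by simp
  have x4: "degree E x = 4"
  proof (rule ccontr)
    assume "degree E x \<noteq> 4"
    then have "degree E x \<le> 3" using \<open>degree E x \<le> 4\<close> by simp
    then show False
      using irr bad light reducible_deg2_one_heavy[OF fsg deg N] \<open>degree E w \<le> 4\<close>
      by (cases "degree E w = 4") auto
  qed
  moreover have "deg2_count E x = 1"
  proof (rule ccontr)
    assume "deg2_count E x \<noteq> 1"
    then have "2 \<le> deg2_count E x" using kx by simp
    then show False
      using irr bad x4 reducible_deg2_two_heavy[OF fsg deg N] reducible_deg2_one_heavy[OF fsg deg N' x4]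
        \<open>degree E w \<le> 4\<close>
      by (cases "degree E w = 4") auto
  qed
  ultimately show ?thesis ..
qed

text \<open>The discharging rule: every vertex of degree 4 sends charge 1/k to each of its k
  neighbours of degree 2.\<close>

definition charge :: "'a set set \<Rightarrow> 'a \<Rightarrow> real" where
  "charge E w = (if degree E w = 4 then 1 / real (deg2_count E w) else 0)"

lemma irreducible_deg2_charge:
  assumes fsg: "finite_simple_graph V E" and deg: "\<forall>u\<in>V. degree E u \<le> 4"
    and dv: "degree E v = 2" and irr: "\<not> reducible E v 13"
  shows "1 \<le> (\<Sum>w\<in>neighbors E v. charge E w)"
proof -
  obtain w x where N: "neighbors E v = {w, x}" "w \<noteq> x" using dv by (rule degree_two_neighbors)
  have N': "neighbors E v = {x, w}" "x \<noteq> w" using N by auto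
  have sum: "(\<Sum>w\<in>neighbors E v. charge E w) = charge E w + charge E x" using N by simp
  have nonneg: "0 \<le> charge E u" for u unfolding charge_def by simp
  have half: "1 / 2 \<le> charge E u" if "degree E u = 4" "1 \<le> deg2_count E u" "deg2_count E u \<le> 2" for u
  proof -
    have "deg2_count E u = 1 \<or> deg2_count E u = 2" using that by auto
    then show ?thesis using that(1) unfolding charge_def by auto
  qed
  have "v \<in> neighbors E w" "v \<in> neighbors E x" using N neighbors_sym[of _ E v] by auto
  then have k: "1 \<le> deg2_count E w" "1 \<le> deg2_count E x"
    using deg2_count_pos[OF fsg _ dv] by blast+
  consider "degree E w \<noteq> 4 \<or> 3 \<le> deg2_count E w" | "degree E x \<noteq> 4 \<or> 3 \<le> deg2_count E x"
    | "degree E w = 4" "deg2_count E w \<le> 2" "degree E x = 4" "deg2_count E x \<le> 2"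
    by linarith
  then show ?thesis
  proof cases
    case 1
    then have "charge E x = 1"
      using irreducible_deg2_neighbor[OF fsg deg N irr] unfolding charge_def by simp
    then show ?thesis using sum nonneg[of w] by simp
  next
    case 2
    then have "charge E w = 1"
      using irreducible_deg2_neighbor[OF fsg deg N' irr] unfolding charge_def by simp
    then show ?thesis using sum nonneg[of x] by simp
  next
    case 3
    then have "1 / 2 \<le> charge E w" "1 / 2 \<le> charge E x" using half k by auto
    then show ?thesis using sum by linarith
  qed
qed

lemma total_charge_le:
  assumes fsg: "finite_simple_graph V E"
  shows "(\<Sum>v\<in>{v\<in>V. degree E v = 2}. \<Sum>w\<in>neighbors E v. charge E w)
    \<le> real (card {w\<in>V. degree E w = 4})"
proof -
  let ?V2 = "{v\<in>V. degree E v = 2}"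
  have fV: "finite V" using fsg unfolding finite_simple_graph_def by simp
  have "(\<Sum>v\<in>?V2. \<Sum>w\<in>neighbors E v. charge E w) = (\<Sum>v\<in>?V2. \<Sum>w\<in>{w\<in>V. v \<in> neighbors E w}. charge E w)"
    using neighbors_subset[OF fsg] neighbors_sym[of _ E] by (intro sum.cong refl arg_cong2[where f = sum]) auto
  also have "\<dots> = (\<Sum>w\<in>V. \<Sum>v\<in>{v\<in>?V2. v \<in> neighbors E w}. charge E w)"
    using fV by (intro sum.swap_restrict) auto
  also have "\<dots> = (\<Sum>w\<in>V. charge E w * real (deg2_count E w))"
  proof (intro sum.cong refl)
    fix w assume "w \<in> V"
    have "{v\<in>?V2. v \<in> neighbors E w} = {y\<in>neighbors E w. degree E y = 2}"
      using neighbors_subset[OF fsg, of w] by auto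
    then show "(\<Sum>v\<in>{v\<in>?V2. v \<in> neighbors E w}. charge E w) = charge E w * real (deg2_count E w)"
      unfolding deg2_count_def by simp
  qed
  also have "\<dots> \<le> (\<Sum>w\<in>V. if degree E w = 4 then 1 else 0)"
    by (intro sum_mono) (simp add: charge_def)
  also have "\<dots> = real (card {w\<in>V. degree E w = 4})"
    using fV by (simp add: sum.inter_filter[symmetric])
  finally show ?thesis .
qed

lemma degree_sum_ge:
  assumes fV: "finite V" and degs: "\<forall>u\<in>V. 2 \<le> degree E u \<and> degree E u \<le> 4"
    and cards: "card {u\<in>V. degree E u = 2} \<le> card {u\<in>V. degree E u = 4}"
  shows "3 * card V \<le> (\<Sum>u\<in>V. degree E u)"
proof -
  have "(\<Sum>u\<in>V. degree E u + (if degree E u = 2 then 1 else 0))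
      = (\<Sum>u\<in>V. 3 + (if degree E u = 4 then 1 else 0))"
  proof (intro sum.cong refl)
    fix u assume "u \<in> V"
    then have "degree E u \<in> {2, 3, 4}" using degs by auto
    then show "degree E u + (if degree E u = 2 then 1 else 0) = 3 + (if degree E u = 4 then 1 else 0)"
      by auto
  qed
  then have "(\<Sum>u\<in>V. degree E u) + card {u\<in>V. degree E u = 2} = 3 * card V + card {u\<in>V. degree E u = 4}"
    using fV by (simp add: sum.distrib sum.inter_filter[symmetric])
  then show ?thesis using cards by linarith
qed

lemma discharging:
  assumes fsg: "finite_simple_graph V E" and degs: "\<forall>u\<in>V. 2 \<le> degree E u \<and> degree E u \<le> 4"
    and charged: "\<forall>v\<in>V. degree E v = 2 \<longrightarrow> 1 \<le> (\<Sum>w\<in>neighbors E v. charge E w)"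
  shows "3 * card V \<le> 2 * card E"
proof -
  have "real (card {v\<in>V. degree E v = 2}) = (\<Sum>v\<in>{v\<in>V. degree E v = 2}. 1)" by simp
  also have "\<dots> \<le> (\<Sum>v\<in>{v\<in>V. degree E v = 2}. \<Sum>w\<in>neighbors E v. charge E w)"
    using charged by (intro sum_mono) auto
  also have "\<dots> \<le> real (card {w\<in>V. degree E w = 4})" by (rule total_charge_le[OF fsg])
  finally have "card {v\<in>V. degree E v = 2} \<le> card {w\<in>V. degree E w = 4}" by linarith
  then show ?thesis
    using degree_sum_ge[OF _ degs] degree_sum[OF fsg] fsg unfolding finite_simple_graph_def by simp
qed

text \<open>The combinatorial content of mad(G) < 3: every nonempty subgraph has fewer than
  3/2 edges per vertex.  Unlike mad itself this is evidently inherited by subgraphs.\<close>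

definition sparse :: "'a set \<Rightarrow> 'a set set \<Rightarrow> bool" where
  "sparse V E \<longleftrightarrow> (\<forall>W F. subgraph W F V E \<and> W \<noteq> {} \<longrightarrow> 2 * card F < 3 * card W)"

lemma mad_less_3_sparse:
  assumes fsg: "finite_simple_graph V E" and mad: "mad V E < 3"
  shows "sparse V E"
  unfolding sparse_def
proof (intro allI impI)
  fix W F assume WF: "subgraph W F V E \<and> W \<noteq> {}"
  define S where "S = {2 * real (card F) / real (card W) | W F. subgraph W F V E \<and> W \<noteq> {}}"
  have fV: "finite V" and fE: "finite E"
    using fsg fsg_finite_edges unfolding finite_simple_graph_def by auto
  have "S \<subseteq> (\<lambda>(W, F). 2 * real (card F) / real (card W)) ` (Pow V \<times> Pow E)"
    unfolding S_def subgraph_def by auto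
  then have "finite S" using fV fE by (meson finite_Pow_iff finite_SigmaI finite_imageI finite_subset)
  moreover have "2 * real (card F) / real (card W) \<in> S" unfolding S_def using WF by blast
  ultimately have "2 * real (card F) / real (card W) < 3"
    using mad unfolding mad_def S_def[symmetric] by (meson Max_ge le_less_trans)
  moreover have "0 < card W"
    using WF fV unfolding subgraph_def by (meson card_gt_0_iff finite_subset)
  ultimately have "2 * real (card F) < 3 * real (card W)" by (simp add: divide_less_eq)
  then show "2 * card F < 3 * card W" by linarith
qed

lemma sparse_delete_vertex:
  assumes "sparse V E"
  shows "sparse (V - {v}) {e\<in>E. v \<notin> e}"
proof -
  have "subgraph W F V E" if "subgraph W F (V - {v}) {e\<in>E. v \<notin> e}" for W F
    using that unfolding subgraph_def by blast
  then show ?thesis using assms unfolding sparse_def by simp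
qed

lemma degree_delete_vertex:
  assumes "finite_simple_graph V E"
  shows "degree {e\<in>E. v \<notin> e} u \<le> degree E u"
proof -
  have "neighbors {e\<in>E. v \<notin> e} u \<subseteq> neighbors E u" unfolding neighbors_def by auto
  then show ?thesis unfolding degree_def by (simp add: card_mono finite_neighbors[OF assms])
qed

text \<open>Every nonempty sparse graph with maximum degree D \<le> 4 has a vertex that is reducible
  for 3D + 1 colours; otherwise discharging would give average degree at least 3.\<close>

lemma exists_reducible_vertex:
  assumes fsg: "finite_simple_graph V E" and deg: "\<forall>u\<in>V. degree E u \<le> D" and D: "D \<le> 4"
    and sp: "sparse V E" and ne: "V \<noteq> {}"
  shows "\<exists>v\<in>V. reducible E v (3 * D + 1)"
proof (rule ccontr)
  assume irr: "\<not> ?thesis"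
  have degs: "\<forall>u\<in>V. 2 \<le> degree E u \<and> degree E u \<le> 4"
  proof
    fix u assume "u \<in> V"
    then have "\<not> degree E u \<le> 1" using irr reducible_low_degree[OF fsg deg D] by blast
    then show "2 \<le> degree E u \<and> degree E u \<le> 4" using deg D \<open>u \<in> V\<close> by force
  qed
  have "1 \<le> (\<Sum>w\<in>neighbors E v. charge E w)" if v: "v \<in> V" "degree E v = 2" for v
  proof (cases "D = 4")
    case True
    then show ?thesis using irreducible_deg2_charge[OF fsg _ v(2)] deg irr v(1) by auto
  next
    case False
    obtain w x where N: "neighbors E v = {w, x}" "w \<noteq> x" using v(2) by (rule degree_two_neighbors)
    have "degree E w \<le> 3" "degree E x \<le> 3" using False D deg neighbors_subset[OF fsg, of v] N by auto
    then show ?thesis using reducible_deg2_light[OF fsg deg D N] irr v(1) by blast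
  qed
  then have "3 * card V \<le> 2 * card E" using discharging[OF fsg degs] by blast
  moreover have "subgraph V E V E" using fsg unfolding subgraph_def finite_simple_graph_def by auto
  ultimately show False using sp ne unfolding sparse_def by fastforce
qed

lemma sparse_strong_coloring:
  assumes "finite_simple_graph V E" "\<forall>u\<in>V. degree E u \<le> D" "D \<le> 4" "sparse V E"
  shows "\<exists>c. strong_edge_coloring E c \<and> (\<forall>e\<in>E. c e < 3 * D + 1)"
  using assms
proof (induction "card V" arbitrary: V E rule: less_induct)
  case less
  note fsg = less.prems(1)
  show ?case
  proof (cases "V = {}")
    case True
    then have "E = {}" using fsg unfolding finite_simple_graph_def by fastforce
    then show ?thesis unfolding strong_edge_coloring_def by auto
  next
    case False
    then obtain v where v: "v \<in> V" "reducible E v (3 * D + 1)"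
      using exists_reducible_vertex[OF fsg less.prems(2-4)] by blast
    have "card (V - {v}) < card V"
      using fsg v(1) unfolding finite_simple_graph_def by (meson card_Diff1_less)
    moreover have "\<forall>u\<in>V - {v}. degree {e\<in>E. v \<notin> e} u \<le> D"
      using less.prems(2) degree_delete_vertex[OF fsg] le_trans by blast
    ultimately obtain c where c: "strong_edge_coloring {e\<in>E. v \<notin> e} c"
      "\<forall>e\<in>{e\<in>E. v \<notin> e}. c e < 3 * D + 1"
      using less.hyps[OF _ delete_vertex_graph[OF fsg] _ less.prems(3) sparse_delete_vertex[OF less.prems(4)]]
      by blast
    show ?thesis by (rule reducible_extend[OF fsg c v(2)])
  qed
qed

theorem theorem2p3:
  fixes V :: "'a set" and E :: "'a set set"
  assumes "finite_simple_graph V E"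
    and "mad V E < 3"
    and "max_degree V E \<le> 4"
  shows "strong_chromatic_index E \<le> 3 * max_degree V E + 1"
proof -
  have "\<forall>u\<in>V. degree E u \<le> max_degree V E" using degree_le_max_degree[OF assms(1)] by blast
  then obtain c where "strong_edge_coloring E c" "\<forall>e\<in>E. c e < 3 * max_degree V E + 1"
    using sparse_strong_coloring[OF assms(1) _ assms(3) mad_less_3_sparse[OF assms(1,2)]] by blast
  then show ?thesis unfolding strong_chromatic_index_def by (intro Least_le) blast
qed

end
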